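(* Let $H$ be a crossed group-cograded weak Hopf quasigroup over $G$ with bijective antipode and crossing $(\pi_q)_{q\in G}$, let $p,q\in G$ and $(V,\rho^V)\in\mathcal{YDWQ}(H)_p$. Let ${}^qV$ be the vector space $V$, whose element corresponding to $v\in V$ is written ${}^qv$, with structures ${}^qv\cdot h={}^q\big(v\cdot\pi_{q^{-1}}(h)\big)$ for $h\in H_{qpq^{-1}}$, and $\rho_r^{{}^qV}({}^qv)={}^q(v_{(0)})\otimes\pi_q(v_{(1,q^{-1}rq)})$ for $r\in G$. Then ${}^qV\in\mathcal{YDWQ}(H)_{qpq^{-1}}$.
   Context: Let $k$ be a field and $G$ a group with identity $e$. A group-cograded weak Hopf quasigroup $H$ over $G$ consists of a family $(H_p)_{p\in G}$ of unital, not necessarily associative, $k$-algebras with units $1_p$; coassociative linear maps $\Delta_{p,q}:H_{pq}\to H_p\otimes H_q$, written $\Delta_{p,q}(h)=h_{(1,p)}\otimes h_{(2,q)}$ (iterated: $h_{(1,p)}\otimes h_{(2,q)}\otimes h_{(3,r)}$, etc.); and a counit $\epsilon:H_e\to k$ with $(\epsilon\otimes\mathrm{id})\Delta_{e,p}=\mathrm{id}=(\mathrm{id}\otimes\epsilon)\Delta_{p,e}$; such that: (1) each $\Delta_{p,q}$ is multiplicative and $(\Delta_{p,q}\otimes\mathrm{id})\Delta_{pq,r}(1_{pqr})=(\Delta_{p,q}(1_{pq})\otimes 1_r)(1_p\otimes\Delta_{q,r}(1_{qr}))=(1_p\otimes\Delta_{q,r}(1_{qr}))(\Delta_{p,q}(1_{pq})\otimes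 1_r)$; (2) $\epsilon((gh)l)=\epsilon(g(hl))=\epsilon(gh_{(2,e)})\epsilon(h_{(1,e)}l)=\epsilon(gh_{(1,e)})\epsilon(h_{(2,e)}l)$ for $g,h,l\in H_e$; (3) writing $\Delta_{p,q}(1_{pq})=1_{(1,p)}\otimes 1_{(2,q)}$ and $\epsilon^t_p(h)=\epsilon(1_{(1,e)}h)1_{(2,p)}$, $\epsilon^s_p(h)=1_{(1,p)}\epsilon(h1_{(2,e)})$ for $h\in H_e$, there are linear maps $S_p:H_p\to H_{p^{-1}}$ with $S_p(h)=S_p(h_{(1,p)})\epsilon^t_{p^{-1}}(h_{(2,e)})=\epsilon^s_{p^{-1}}(h_{(1,e)})S_p(h_{(2,p)})$ for $h\in H_p$ and, for $h\in H_e$, $g\in H_p$: $S_{p^{-1}}(h_{(1,p^{-1})})(h_{(2,p)}g)=\epsilon^s_p(h)g$, $h_{(1,p)}(S_{p^{-1}}(h_{(2,p^{-1})})g)=\epsilon^t_p(h)g$, $(gh_{(1,p)})S_{p^{-1}}(h_{(2,p^{-1})})=g\epsilon^t_p(h)$, $(gS_{p^{-1}}(h_{(1,p^{-1})}))h_{(2,p)}=g\epsilon^s_p(h)$. It is crossed if equipped with algebra isomorphisms $\pi_p:H_q\to H_{pqp^{-1}}$ with $(\pi_p\otimes\pi_p)\Delta_{q,r}=\Delta_{pqp^{-1},prp^{-1}}\pi_p$, $\epsilon\pi_p=\epsilon$, $\pi_{pq}=\pi_p\pi_q$. The antipode is bijective if every $S_p$ is bijective. For fixed $p\in G$, a right-right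 $p$-Yetter-Drinfeld weak quasimodule over $H$ is a vector space $V$ with a bilinear map $V\times H_p\to V$, $(v,h)\mapsto v\cdot h$, and linear maps $\rho_r:V\to V\otimes H_r$ ($r\in G$), $\rho_r(v)=v_{(0)}\otimes v_{(1,r)}$, such that: (i) $v\cdot 1_p=v$, and for $h\in H_e$: $(v\cdot h_{(1,p)})\cdot S_{p^{-1}}(h_{(2,p^{-1})})=v\cdot\epsilon^t_p(h)$ and $(v\cdot S_{p^{-1}}(h_{(1,p^{-1})}))\cdot h_{(2,p)}=v\cdot\epsilon^s_p(h)$; (ii) $(\rho_{r_1}\otimes\mathrm{id}_{H_{r_2}})\rho_{r_2}=(\mathrm{id}_V\otimes\Delta_{r_1,r_2})\rho_{r_1r_2}$ and $(\mathrm{id}_V\otimes\epsilon)\rho_e=\mathrm{id}_V$; (iii) for all $v\in V$, $r\in G$, $h\in H_p$, $g,l\in H_r$: $\rho_r(v\cdot h)=v_{(0)}\cdot h_{(2,p)}\otimes S_{r^{-1}}(\pi_{p^{-1}}(h_{(1,pr^{-1}p^{-1})}))\,(v_{(1,r)}h_{(3,r)})$, $v_{(0)}\otimes(gl)v_{(1,r)}=v_{(0)}\otimes g(lv_{(1,r)})$, and $v_{(0)}\otimes(gv_{(1,r)})l=v_{(0)}\otimes g(v_{(1,r)}l)$. Morphisms are $H_p$-linear maps $f$ with $\rho^W_r f=(f\otimes\mathrm{id})\rho^V_r$ for all $r$. These form the category $\mathcal{YDWQ}(H)_p$. *)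

theory Defs
  imports Main "HOL.Vector_Spaces"
begin

text \<open>The group G is a type
 'g of class group_add (NOT assumed commutative); the group law is written +, identity 0,
 inverse uminus. All the algebras H_p live as subspaces Hc p of one ambient k-vector space
 'h with scalar multiplication scH; every structure map carries its grade index(es), so
 overlaps of the Hc p inside 'h are irrelevant. Tensors are represented by finite lists of
 elementary tensors (Sweedler sums); two such lists are equal as tensors iff all
 (bi/tri)linear forms agree on them (dual of the tensor product separates points).\<close>

definition lin_fun :: "('k::field \<Rightarrow> 'a::ab_group_add \<Rightarrow> 'a) \<Rightarrow> 'a set \<Rightarrow> ('a \<Rightarrow> 'k) \<Rightarrow> bool" where
  "lin_fun sA A f \<longleftrightarrow> (\<forall>x\<in>A. \<forall>y\<in>A. f (x + y) = f x + f y) \<and> (\<forall>c. \<forall>x\<in>A. f (sA c x) = c * f x)"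

definition lin_map :: "('k::field \<Rightarrow> 'a::ab_group_add \<Rightarrow> 'a) \<Rightarrow> 'a set \<Rightarrow>
    ('k \<Rightarrow> 'b::ab_group_add \<Rightarrow> 'b) \<Rightarrow> 'b set \<Rightarrow> ('a \<Rightarrow> 'b) \<Rightarrow> bool" where
  "lin_map sA A sB B f \<longleftrightarrow> (\<forall>x\<in>A. f x \<in> B) \<and> (\<forall>x\<in>A. \<forall>y\<in>A. f (x + y) = f x + f y)
     \<and> (\<forall>c. \<forall>x\<in>A. f (sA c x) = sB c (f x))"

definition teq2 :: "('k::field \<Rightarrow> 'a::ab_group_add \<Rightarrow> 'a) \<Rightarrow> 'a set \<Rightarrow>
    ('k \<Rightarrow> 'b::ab_group_add \<Rightarrow> 'b) \<Rightarrow> 'b set \<Rightarrow> ('a \<times> 'b) list \<Rightarrow> ('a \<times> 'b) list \<Rightarrow> bool" where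
  "teq2 sA A sB B xs ys \<longleftrightarrow>
     (\<forall>\<phi> :: 'a \<Rightarrow> 'b \<Rightarrow> 'k.
        (\<forall>b\<in>B. lin_fun sA A (\<lambda>a. \<phi> a b)) \<and> (\<forall>a\<in>A. lin_fun sB B (\<phi> a)) \<longrightarrow>
        sum_list (map (\<lambda>(a, b). \<phi> a b) xs) = sum_list (map (\<lambda>(a, b). \<phi> a b) ys))"

definition teq3 :: "('k::field \<Rightarrow> 'a::ab_group_add \<Rightarrow> 'a) \<Rightarrow> 'a set \<Rightarrow>
    ('k \<Rightarrow> 'b::ab_group_add \<Rightarrow> 'b) \<Rightarrow> 'b set \<Rightarrow> ('k \<Rightarrow> 'c::ab_group_add \<Rightarrow> 'c) \<Rightarrow> 'c set \<Rightarrow>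
    ('a \<times> 'b \<times> 'c) list \<Rightarrow> ('a \<times> 'b \<times> 'c) list \<Rightarrow> bool" where
  "teq3 sA A sB B sC C xs ys \<longleftrightarrow>
     (\<forall>\<phi> :: 'a \<Rightarrow> 'b \<Rightarrow> 'c \<Rightarrow> 'k.
        (\<forall>b\<in>B. \<forall>c\<in>C. lin_fun sA A (\<lambda>a. \<phi> a b c)) \<and> (\<forall>a\<in>A. \<forall>c\<in>C. lin_fun sB B (\<lambda>b. \<phi> a b c))
        \<and> (\<forall>a\<in>A. \<forall>b\<in>B. lin_fun sC C (\<phi> a b)) \<longrightarrow>
        sum_list (map (\<lambda>(a, b, c). \<phi> a b c) xs) = sum_list (map (\<lambda>(a, b, c). \<phi> a b c) ys))"

definition tlin :: "('k::field \<Rightarrow> 'a::ab_group_add \<Rightarrow> 'a) \<Rightarrow> 'a set \<Rightarrow>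
    ('k \<Rightarrow> 'b::ab_group_add \<Rightarrow> 'b) \<Rightarrow> 'b set \<Rightarrow> ('k \<Rightarrow> 'c::ab_group_add \<Rightarrow> 'c) \<Rightarrow> 'c set \<Rightarrow>
    ('a \<Rightarrow> ('b \<times> 'c) list) \<Rightarrow> bool" where
  "tlin sA A sB B sC C F \<longleftrightarrow>
     (\<forall>x\<in>A. set (F x) \<subseteq> B \<times> C) \<and>
     (\<forall>x\<in>A. \<forall>y\<in>A. teq2 sB B sC C (F (x + y)) (F x @ F y)) \<and>
     (\<forall>c. \<forall>x\<in>A. teq2 sB B sC C (F (sA c x)) (map (\<lambda>(b, d). (sB c b, d)) (F x)))"

definition delta3 :: "('g::group_add \<Rightarrow> 'g \<Rightarrow> 'h \<Rightarrow> ('h \<times> 'h) list) \<Rightarrow> 'g \<Rightarrow> 'g \<Rightarrow> 'g \<Rightarrow> 'h \<Rightarrow> ('h \<times> 'h \<times> 'h) list" where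
  "delta3 Dl p q r h = [(a, b, z). (x, z) \<leftarrow> Dl (p + q) r h, (a, b) \<leftarrow> Dl p q x]"

definition epst :: "('k::field \<Rightarrow> 'h::ab_group_add \<Rightarrow> 'h) \<Rightarrow> ('g::group_add \<Rightarrow> 'h \<Rightarrow> 'h \<Rightarrow> 'h) \<Rightarrow>
    ('g \<Rightarrow> 'h) \<Rightarrow> ('g \<Rightarrow> 'g \<Rightarrow> 'h \<Rightarrow> ('h \<times> 'h) list) \<Rightarrow> ('h \<Rightarrow> 'k) \<Rightarrow> 'g \<Rightarrow> 'h \<Rightarrow> 'h" where
  "epst scH mu one Dl eps p h = sum_list (map (\<lambda>(a, b). scH (eps (mu 0 a h)) b) (Dl 0 p (one p)))"

definition epss :: "('k::field \<Rightarrow> 'h::ab_group_add \<Rightarrow> 'h) \<Rightarrow> ('g::group_add \<Rightarrow> 'h \<Rightarrow> 'h \<Rightarrow> 'h) \<Rightarrow>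
    ('g \<Rightarrow> 'h) \<Rightarrow> ('g \<Rightarrow> 'g \<Rightarrow> 'h \<Rightarrow> ('h \<times> 'h) list) \<Rightarrow> ('h \<Rightarrow> 'k) \<Rightarrow> 'g \<Rightarrow> 'h \<Rightarrow> 'h" where
  "epss scH mu one Dl eps p h = sum_list (map (\<lambda>(a, b). scH (eps (mu 0 h b)) a) (Dl p 0 (one p)))"

text \<open>Here mu p is the multiplication of H_p, one p its unit, Dl p q h the
 comultiplication \<Delta>_{p,q}(h) for h in H_{p+q}, S p : H_p \<rightarrow> H_{-p}, and pi p q : H_q \<rightarrow> H_{p+q-p}
 is the crossing \<pi>_p restricted to H_q.\<close>
definition crossed_gcwhq ::
  "('k::field \<Rightarrow> 'h::ab_group_add \<Rightarrow> 'h) \<Rightarrow> ('g::group_add \<Rightarrow> 'h set) \<Rightarrow> ('g \<Rightarrow> 'h \<Rightarrow> 'h \<Rightarrow> 'h) \<Rightarrow>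
   ('g \<Rightarrow> 'h) \<Rightarrow> ('g \<Rightarrow> 'g \<Rightarrow> 'h \<Rightarrow> ('h \<times> 'h) list) \<Rightarrow> ('h \<Rightarrow> 'k) \<Rightarrow> ('g \<Rightarrow> 'h \<Rightarrow> 'h) \<Rightarrow>
   ('g \<Rightarrow> 'g \<Rightarrow> 'h \<Rightarrow> 'h) \<Rightarrow> bool" where
  "crossed_gcwhq scH Hc mu one Dl eps S pi \<longleftrightarrow>
    vector_space scH \<and>
    (\<forall>p. 0 \<in> Hc p \<and> (\<forall>x\<in>Hc p. \<forall>y\<in>Hc p. x + y \<in> Hc p) \<and> (\<forall>c. \<forall>x\<in>Hc p. scH c x \<in> Hc p)) \<and>
    \<comment> \<open>each H_p is a unital (not necessarily associative) k-algebra\<close>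
    (\<forall>p. \<forall>x\<in>Hc p. \<forall>y\<in>Hc p. mu p x y \<in> Hc p) \<and>
    (\<forall>p. \<forall>x\<in>Hc p. \<forall>y\<in>Hc p. \<forall>z\<in>Hc p.
        mu p (x + y) z = mu p x z + mu p y z \<and> mu p z (x + y) = mu p z x + mu p z y) \<and>
    (\<forall>p c. \<forall>x\<in>Hc p. \<forall>y\<in>Hc p. mu p (scH c x) y = scH c (mu p x y) \<and> mu p x (scH c y) = scH c (mu p x y)) \<and>
    (\<forall>p. one p \<in> Hc p \<and> (\<forall>x\<in>Hc p. mu p (one p) x = x \<and> mu p x (one p) = x)) \<and>
    \<comment> \<open>linear, coassociative comultiplication\<close>
    (\<forall>p q. tlin scH (Hc (p + q)) scH (Hc p) scH (Hc q) (Dl p q)) \<and>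
    (\<forall>p q r. \<forall>h\<in>Hc (p + q + r).
        teq3 scH (Hc p) scH (Hc q) scH (Hc r) (delta3 Dl p q r h)
          [(a, b, c). (a, y) \<leftarrow> Dl p (q + r) h, (b, c) \<leftarrow> Dl q r y]) \<and>
    \<comment> \<open>counit\<close>
    lin_fun scH (Hc 0) eps \<and>
    (\<forall>p. \<forall>h\<in>Hc p. sum_list (map (\<lambda>(a, b). scH (eps a) b) (Dl 0 p h)) = h
                 \<and> sum_list (map (\<lambda>(a, b). scH (eps b) a) (Dl p 0 h)) = h) \<and>
    \<comment> \<open>(1)\<close>
    (\<forall>p q. \<forall>g\<in>Hc (p + q). \<forall>h\<in>Hc (p + q).
        teq2 scH (Hc p) scH (Hc q) (Dl p q (mu (p + q) g h))
          [(mu p a c, mu q b d). (a, b) \<leftarrow> Dl p q g, (c, d) \<leftarrow> Dl p q h]) \<and>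
    (\<forall>p q r.
        teq3 scH (Hc p) scH (Hc q) scH (Hc r) (delta3 Dl p q r (one (p + q + r)))
          [(mu p a (one p), mu q b c, mu r (one r) d). (a, b) \<leftarrow> Dl p q (one (p + q)), (c, d) \<leftarrow> Dl q r (one (q + r))] \<and>
        teq3 scH (Hc p) scH (Hc q) scH (Hc r) (delta3 Dl p q r (one (p + q + r)))
          [(mu p (one p) a, mu q c b, mu r d (one r)). (a, b) \<leftarrow> Dl p q (one (p + q)), (c, d) \<leftarrow> Dl q r (one (q + r))]) \<and>
    \<comment> \<open>(2)\<close>
    (\<forall>g\<in>Hc 0. \<forall>h\<in>Hc 0. \<forall>l\<in>Hc 0.
        eps (mu 0 (mu 0 g h) l) = eps (mu 0 g (mu 0 h l)) \<and>
        eps (mu 0 g (mu 0 h l)) = sum_list (map (\<lambda>(a, b). eps (mu 0 g b) * eps (mu 0 a l)) (Dl 0 0 h)) \<and>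
        sum_list (map (\<lambda>(a, b). eps (mu 0 g b) * eps (mu 0 a l)) (Dl 0 0 h))
          = sum_list (map (\<lambda>(a, b). eps (mu 0 g a) * eps (mu 0 b l)) (Dl 0 0 h))) \<and>
    \<comment> \<open>(3) antipode\<close>
    (\<forall>p. lin_map scH (Hc p) scH (Hc (- p)) (S p)) \<and>
    (\<forall>p. \<forall>h\<in>Hc p.
        S p h = sum_list (map (\<lambda>(a, b). mu (- p) (S p a) (epst scH mu one Dl eps (- p) b)) (Dl p 0 h)) \<and>
        S p h = sum_list (map (\<lambda>(a, b). mu (- p) (epss scH mu one Dl eps (- p) a) (S p b)) (Dl 0 p h))) \<and>
    (\<forall>p. \<forall>h\<in>Hc 0. \<forall>g\<in>Hc p.
        sum_list (map (\<lambda>(a, b). mu p (S (- p) a) (mu p b g)) (Dl (- p) p h)) = mu p (epss scH mu one Dl eps p h) g \<and>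
        sum_list (map (\<lambda>(a, b). mu p a (mu p (S (- p) b) g)) (Dl p (- p) h)) = mu p (epst scH mu one Dl eps p h) g \<and>
        sum_list (map (\<lambda>(a, b). mu p (mu p g a) (S (- p) b)) (Dl p (- p) h)) = mu p g (epst scH mu one Dl eps p h) \<and>
        sum_list (map (\<lambda>(a, b). mu p (mu p g (S (- p) a)) b) (Dl (- p) p h)) = mu p g (epss scH mu one Dl eps p h)) \<and>
    \<comment> \<open>crossing\<close>
    (\<forall>p q. lin_map scH (Hc q) scH (Hc (p + q + - p)) (pi p q) \<and> bij_betw (pi p q) (Hc q) (Hc (p + q + - p)) \<and>
        (\<forall>x\<in>Hc q. \<forall>y\<in>Hc q. pi p q (mu q x y) = mu (p + q + - p) (pi p q x) (pi p q y)) \<and>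
        pi p q (one q) = one (p + q + - p)) \<and>
    (\<forall>p q r. \<forall>h\<in>Hc (q + r).
        teq2 scH (Hc (p + q + - p)) scH (Hc (p + r + - p))
          (map (\<lambda>(a, b). (pi p q a, pi p r b)) (Dl q r h))
          (Dl (p + q + - p) (p + r + - p) (pi p (q + r) h))) \<and>
    (\<forall>p. \<forall>h\<in>Hc 0. eps (pi p 0 h) = eps h) \<and>
    (\<forall>p q r. \<forall>h\<in>Hc r. pi (p + q) r h = pi p (q + r + - q) (pi q r h))"

text \<open>The vector
 space V is the type 'v with scalar multiplication scV; act v h = v \<cdot> h for h in H_p;
 rho r v is \<rho>_r(v) \<in> V \<otimes> H_r.\<close>
definition ydwq ::
  "('k::field \<Rightarrow> 'h::ab_group_add \<Rightarrow> 'h) \<Rightarrow> ('g::group_add \<Rightarrow> 'h set) \<Rightarrow> ('g \<Rightarrow> 'h \<Rightarrow> 'h \<Rightarrow> 'h) \<Rightarrow>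
   ('g \<Rightarrow> 'h) \<Rightarrow> ('g \<Rightarrow> 'g \<Rightarrow> 'h \<Rightarrow> ('h \<times> 'h) list) \<Rightarrow> ('h \<Rightarrow> 'k) \<Rightarrow> ('g \<Rightarrow> 'h \<Rightarrow> 'h) \<Rightarrow>
   ('g \<Rightarrow> 'g \<Rightarrow> 'h \<Rightarrow> 'h) \<Rightarrow> ('k \<Rightarrow> 'v::ab_group_add \<Rightarrow> 'v) \<Rightarrow> 'g \<Rightarrow>
   ('v \<Rightarrow> 'h \<Rightarrow> 'v) \<Rightarrow> ('g \<Rightarrow> 'v \<Rightarrow> ('v \<times> 'h) list) \<Rightarrow> bool" where
  "ydwq scH Hc mu one Dl eps S pi scV p act rho \<longleftrightarrow>
    vector_space scV \<and>
    \<comment> \<open>bilinear action V \<times> H_p \<rightarrow> V\<close>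
    (\<forall>h\<in>Hc p. \<forall>v w. act (v + w) h = act v h + act w h) \<and>
    (\<forall>h\<in>Hc p. \<forall>c v. act (scV c v) h = scV c (act v h)) \<and>
    (\<forall>v. \<forall>x\<in>Hc p. \<forall>y\<in>Hc p. act v (x + y) = act v x + act v y) \<and>
    (\<forall>v c. \<forall>x\<in>Hc p. act v (scH c x) = scV c (act v x)) \<and>
    \<comment> \<open>(i)\<close>
    (\<forall>v. act v (one p) = v) \<and>
    (\<forall>v. \<forall>h\<in>Hc 0.
       sum_list (map (\<lambda>(a, b). act (act v a) (S (- p) b)) (Dl p (- p) h)) = act v (epst scH mu one Dl eps p h) \<and>
       sum_list (map (\<lambda>(a, b). act (act v (S (- p) a)) b) (Dl (- p) p h)) = act v (epss scH mu one Dl eps p h)) \<and>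
    \<comment> \<open>(ii)\<close>
    (\<forall>r. tlin scV UNIV scV UNIV scH (Hc r) (rho r)) \<and>
    (\<forall>r1 r2 v. teq3 scV UNIV scH (Hc r1) scH (Hc r2)
        [(a, b, c). (x, c) \<leftarrow> rho r2 v, (a, b) \<leftarrow> rho r1 x]
        [(a, b, c). (a, y) \<leftarrow> rho (r1 + r2) v, (b, c) \<leftarrow> Dl r1 r2 y]) \<and>
    (\<forall>v. sum_list (map (\<lambda>(a, b). scV (eps b) a) (rho 0 v)) = v) \<and>
    \<comment> \<open>(iii)\<close>
    (\<forall>v r. \<forall>h\<in>Hc p. teq2 scV UNIV scH (Hc r) (rho r (act v h))
        [(act a h2, mu r (S (- r) (pi (- p) (p + - r + - p) h1)) (mu r b h3)).
            (a, b) \<leftarrow> rho r v, (h1, h2, h3) \<leftarrow> delta3 Dl (p + - r + - p) p r h]) \<and>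
    (\<forall>v r. \<forall>g\<in>Hc r. \<forall>l\<in>Hc r.
        teq2 scV UNIV scH (Hc r) [(a, mu r (mu r g l) b). (a, b) \<leftarrow> rho r v] [(a, mu r g (mu r l b)). (a, b) \<leftarrow> rho r v] \<and>
        teq2 scV UNIV scH (Hc r) [(a, mu r (mu r g b) l). (a, b) \<leftarrow> rho r v] [(a, mu r g (mu r b l)). (a, b) \<leftarrow> rho r v])"

end

theory Submission
  imports Defs
begin

text \<open>The crossing \<pi>_q is an algebra isomorphism H_s \<rightarrow> H_(q s q^-1) compatible with \<Delta> and
  \<epsilon>, hence with the target and source maps; the antipode axioms alone then force
  \<pi>_q S = S \<pi>_q. So each axiom of ^qV at a grade r is the image under \<pi>_q of the same
  axiom of V at the grade q^-1 r q. Equalities of tensors are checked on multilinear forms,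
  which separate the points of a tensor product, and vector-valued identities on linear
  functionals.\<close>

definition lin_on :: "('k::field \<Rightarrow> 'a::ab_group_add \<Rightarrow> 'a) \<Rightarrow> 'a set \<Rightarrow>
    ('k \<Rightarrow> 'c::ab_group_add \<Rightarrow> 'c) \<Rightarrow> ('a \<Rightarrow> 'c) \<Rightarrow> bool" where
  "lin_on sA A sC f \<longleftrightarrow> (\<forall>x\<in>A. \<forall>y\<in>A. f (x + y) = f x + f y) \<and> (\<forall>c. \<forall>x\<in>A. f (sA c x) = sC c (f x))"

lemma lin_fun_iff_lin_on: "lin_fun sA A f \<longleftrightarrow> lin_on sA A (*) f"
  by (simp add: lin_fun_def lin_on_def)

lemma vector_space_mult: "vector_space ((*) :: 'k::field \<Rightarrow> 'k \<Rightarrow> 'k)"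
  by unfold_locales (auto simp: algebra_simps)

lemma lin_on_UNIV_sum_list:
  assumes "lin_on sC UNIV sD l"
  shows "l (sum_list xs) = sum_list (map l xs)"
proof -
  have "l 0 = 0" using assms unfolding lin_on_def by (metis add.right_neutral add_left_cancel UNIV_I)
  then show ?thesis using assms by (induction xs) (auto simp: lin_on_def)
qed

lemma eq_if_lin_functionals_eq:
  fixes sC :: "'k::field \<Rightarrow> 'c::ab_group_add \<Rightarrow> 'c"
  assumes vs: "vector_space sC"
    and all: "\<And>l :: 'c \<Rightarrow> 'k. lin_on sC UNIV (*) l \<Longrightarrow> l u = l w"
  shows "u = w"
proof (rule ccontr)
  assume ne: "u \<noteq> w"
  interpret vp: vector_space_pair sC "(*) :: 'k \<Rightarrow> 'k \<Rightarrow> 'k"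
    using vs vector_space_mult by (simp add: vector_space_pair_def)
  have ind: "vp.vs1.independent {u - w}" using ne
    by (simp add: vp.vs1.independent_insert vp.vs1.span_empty)
  define l where "l = vp.construct {u - w} (\<lambda>_. 1::'k)"
  have ll: "Vector_Spaces.linear sC (*) l"
    unfolding l_def using vp.linear_construct[OF ind, of "\<lambda>_. 1"] by simp
  have "l (u - w) = 1" unfolding l_def by (rule vp.construct_basis[OF ind]) simp
  moreover have "l (u - w) = l u - l w" using vp.linear_diff[OF ll] .
  moreover have "lin_on sC UNIV (*) l" using vp.linear_add[OF ll] vp.linear_scale[OF ll]
    by (simp add: lin_on_def)
  ultimately show False using all[of l] by simp
qed

lemma sum_list_concat_map: "sum_list (concat xss) = sum_list (map sum_list xss)"
  by (induction xss) auto

lemma sum_list_map_pair_cong: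
  "(\<And>a b. (a, b) \<in> set xs \<Longrightarrow> f a b = g a b) \<Longrightarrow>
   sum_list (map (\<lambda>(a, b). f a b) xs) = sum_list (map (\<lambda>(a, b). g a b) xs)"
  by (induction xs) auto

lemma sum_list_map_triple_cong:
  "(\<And>a b c. (a, b, c) \<in> set xs \<Longrightarrow> f a b c = g a b c) \<Longrightarrow>
   sum_list (map (\<lambda>(a, b, c). f a b c) xs) = sum_list (map (\<lambda>(a, b, c). g a b c) xs)"
  by (induction xs) auto

lemma sum_list_map_pair_map:
  "sum_list (map (\<lambda>(a, b). g a b) (map (\<lambda>(a, b). (f1 a, f2 b)) xs))
     = sum_list (map (\<lambda>(a, b). g (f1 a) (f2 b)) xs)"
  by (induction xs) auto

lemma sum_list_map_pair_map_snd:
  "sum_list (map (\<lambda>(a, b). g a b) (map (\<lambda>(a, b). (a, f b)) xs)) = sum_list (map (\<lambda>(a, b). g a (f b)) xs)"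
  by (induction xs) auto

lemma sum_list_map_triple_map:
  "sum_list (map (\<lambda>(a, b, c). g a b c) (map (\<lambda>(a, b, c). (f1 a, f2 b, f3 c)) xs))
     = sum_list (map (\<lambda>(a, b, c). g (f1 a) (f2 b) (f3 c)) xs)"
  by (induction xs) auto

lemma sum_list_map_pair_add_cong:
  "(\<And>a b. (a, b) \<in> set xs \<Longrightarrow> F a b = f a b + g a b) \<Longrightarrow>
   sum_list (map (\<lambda>(a, b). F a b) xs)
     = sum_list (map (\<lambda>(a, b). f a b) xs) + sum_list (map (\<lambda>(a, b). (g a b :: 'c::comm_monoid_add)) xs)"
  by (induction xs) (auto simp: algebra_simps)

lemma additive_sum_list_map_pair:
  fixes F :: "'a::ab_group_add \<Rightarrow> 'b::ab_group_add"
  assumes add: "\<And>u v. u \<in> A \<Longrightarrow> v \<in> A \<Longrightarrow> F (u + v) = F u + F v"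
    and closed: "0 \<in> A" "\<And>u v. u \<in> A \<Longrightarrow> v \<in> A \<Longrightarrow> u + v \<in> A"
    and f: "\<And>a b. (a, b) \<in> set xs \<Longrightarrow> f a b \<in> A"
  shows "F (sum_list (map (\<lambda>(a, b). f a b) xs)) = sum_list (map (\<lambda>(a, b). F (f a b)) xs)"
proof -
  have "F 0 = 0" using add[OF closed(1) closed(1)] by simp
  then have "F (sum_list (map (\<lambda>(a, b). f a b) xs)) = sum_list (map (\<lambda>(a, b). F (f a b)) xs) \<and>
      sum_list (map (\<lambda>(a, b). f a b) xs) \<in> A"
    using f by (induction xs) (auto simp: add closed)
  then show ?thesis by simp
qed

lemma (in vector_space) scale_sum_list_map_pair:
  "scale c (sum_list (map (\<lambda>(a, b). f a b) xs)) = sum_list (map (\<lambda>(a, b). scale c (f a b)) xs)"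
  by (induction xs) (auto simp: scale_right_distrib)

lemma teq2_sum_eq:
  fixes sC :: "'k::field \<Rightarrow> 'c::ab_group_add \<Rightarrow> 'c"
  assumes vs: "vector_space sC" and T: "teq2 sA A sB B X Y"
    and l1: "\<forall>b\<in>B. lin_on sA A sC (\<lambda>a. f a b)" and l2: "\<forall>a\<in>A. lin_on sB B sC (f a)"
  shows "sum_list (map (\<lambda>(a, b). f a b) X) = sum_list (map (\<lambda>(a, b). f a b) Y)"
proof (rule eq_if_lin_functionals_eq[OF vs])
  fix l :: "'c \<Rightarrow> 'k" assume l: "lin_on sC UNIV (*) l"
  have "sum_list (map (\<lambda>(a, b). l (f a b)) X) = sum_list (map (\<lambda>(a, b). l (f a b)) Y)"
    by (rule T[unfolded teq2_def, rule_format, of "\<lambda>a b. l (f a b)"])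
       (use l l1 l2 in \<open>auto simp: lin_fun_def lin_on_def\<close>)
  then show "l (sum_list (map (\<lambda>(a, b). f a b) X)) = l (sum_list (map (\<lambda>(a, b). f a b) Y))"
    by (simp add: lin_on_UNIV_sum_list[OF l] comp_def case_prod_unfold)
qed

lemma teq3_sum_eq:
  fixes sD :: "'k::field \<Rightarrow> 'd::ab_group_add \<Rightarrow> 'd"
  assumes vs: "vector_space sD" and T: "teq3 sA A sB B sC C X Y"
    and l1: "\<forall>b\<in>B. \<forall>c\<in>C. lin_on sA A sD (\<lambda>a. f a b c)"
    and l2: "\<forall>a\<in>A. \<forall>c\<in>C. lin_on sB B sD (\<lambda>b. f a b c)"
    and l3: "\<forall>a\<in>A. \<forall>b\<in>B. lin_on sC C sD (f a b)"
  shows "sum_list (map (\<lambda>(a, b, c). f a b c) X) = sum_list (map (\<lambda>(a, b, c). f a b c) Y)"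
proof (rule eq_if_lin_functionals_eq[OF vs])
  fix l :: "'d \<Rightarrow> 'k" assume l: "lin_on sD UNIV (*) l"
  have "sum_list (map (\<lambda>(a, b, c). l (f a b c)) X) = sum_list (map (\<lambda>(a, b, c). l (f a b c)) Y)"
    by (rule T[unfolded teq3_def, rule_format, of "\<lambda>a b c. l (f a b c)"])
       (use l l1 l2 l3 in \<open>auto simp: lin_fun_def lin_on_def\<close>)
  then show "l (sum_list (map (\<lambda>(a, b, c). f a b c) X)) = l (sum_list (map (\<lambda>(a, b, c). f a b c) Y))"
    by (simp add: lin_on_UNIV_sum_list[OF l] comp_def case_prod_unfold)
qed

lemma teq2_trans: "teq2 sA A sB B X Y \<Longrightarrow> teq2 sA A sB B Y Z \<Longrightarrow> teq2 sA A sB B X Z"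
  unfolding teq2_def by metis

lemma teq2_map_snd:
  fixes sA :: "'k::field \<Rightarrow> 'a::ab_group_add \<Rightarrow> 'a"
  assumes T: "teq2 sA A sB B X Y" and f: "lin_map sB B sC C f"
  shows "teq2 sA A sC C (map (\<lambda>(a, b). (a, f b)) X) (map (\<lambda>(a, b). (a, f b)) Y)"
  unfolding teq2_def
proof (intro allI impI)
  fix \<phi> :: "'a \<Rightarrow> 'c \<Rightarrow> 'k"
  assume \<phi>: "(\<forall>c\<in>C. lin_fun sA A (\<lambda>a. \<phi> a c)) \<and> (\<forall>a\<in>A. lin_fun sC C (\<phi> a))"
  have "sum_list (map (\<lambda>(a, b). \<phi> a (f b)) X) = sum_list (map (\<lambda>(a, b). \<phi> a (f b)) Y)"
    by (rule T[unfolded teq2_def, rule_format, of "\<lambda>a b. \<phi> a (f b)"])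
       (use \<phi> f in \<open>auto simp: lin_fun_def lin_map_def\<close>)
  then show "sum_list (map (\<lambda>(a, b). \<phi> a b) (map (\<lambda>(a, b). (a, f b)) X))
      = sum_list (map (\<lambda>(a, b). \<phi> a b) (map (\<lambda>(a, b). (a, f b)) Y))"
    by (simp only: sum_list_map_pair_map_snd)
qed

text \<open>Grades are normalised to right-nested sums, so that simp decides the grade equalities
  such as - q + (q + r) = r that arise from conjugation.\<close>
declare add_uminus_conv_diff[simp del] add.assoc[simp] minus_add[simp] diff_conv_add_uminus[simp]

locale crossed_hq =
  fixes scH :: "'k::field \<Rightarrow> 'h::ab_group_add \<Rightarrow> 'h"
    and Hc :: "'g::group_add \<Rightarrow> 'h set"
    and mu :: "'g \<Rightarrow> 'h \<Rightarrow> 'h \<Rightarrow> 'h"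
    and one :: "'g \<Rightarrow> 'h"
    and Dl :: "'g \<Rightarrow> 'g \<Rightarrow> 'h \<Rightarrow> ('h \<times> 'h) list"
    and eps :: "'h \<Rightarrow> 'k"
    and S :: "'g \<Rightarrow> 'h \<Rightarrow> 'h"
    and pi :: "'g \<Rightarrow> 'g \<Rightarrow> 'h \<Rightarrow> 'h"
  assumes vector_space_H: "vector_space scH"
    and subspace_Hc: "\<forall>p. 0 \<in> Hc p \<and> (\<forall>x\<in>Hc p. \<forall>y\<in>Hc p. x + y \<in> Hc p) \<and> (\<forall>c. \<forall>x\<in>Hc p. scH c x \<in> Hc p)"
    and closed_mu: "\<forall>p. \<forall>x\<in>Hc p. \<forall>y\<in>Hc p. mu p x y \<in> Hc p"
    and additive_mu: "\<forall>p. \<forall>x\<in>Hc p. \<forall>y\<in>Hc p. \<forall>z\<in>Hc p.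
        mu p (x + y) z = mu p x z + mu p y z \<and> mu p z (x + y) = mu p z x + mu p z y"
    and homogeneous_mu: "\<forall>p c. \<forall>x\<in>Hc p. \<forall>y\<in>Hc p.
        mu p (scH c x) y = scH c (mu p x y) \<and> mu p x (scH c y) = scH c (mu p x y)"
    and unit_one: "\<forall>p. one p \<in> Hc p \<and> (\<forall>x\<in>Hc p. mu p (one p) x = x \<and> mu p x (one p) = x)"
    and tlin_Dl: "\<forall>p q. tlin scH (Hc (p + q)) scH (Hc p) scH (Hc q) (Dl p q)"
    and coassoc_Dl: "\<forall>p q r. \<forall>h\<in>Hc (p + q + r).
        teq3 scH (Hc p) scH (Hc q) scH (Hc r) (delta3 Dl p q r h)
          [(a, b, c). (a, y) \<leftarrow> Dl p (q + r) h, (b, c) \<leftarrow> Dl q r y]"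
    and lin_eps: "lin_fun scH (Hc 0) eps"
    and lin_map_S: "\<forall>p. lin_map scH (Hc p) scH (Hc (- p)) (S p)"
    and S_epst_epss: "\<forall>p. \<forall>h\<in>Hc p.
        S p h = sum_list (map (\<lambda>(a, b). mu (- p) (S p a) (epst scH mu one Dl eps (- p) b)) (Dl p 0 h)) \<and>
        S p h = sum_list (map (\<lambda>(a, b). mu (- p) (epss scH mu one Dl eps (- p) a) (S p b)) (Dl 0 p h))"
    and antipode: "\<forall>p. \<forall>h\<in>Hc 0. \<forall>g\<in>Hc p.
        sum_list (map (\<lambda>(a, b). mu p (S (- p) a) (mu p b g)) (Dl (- p) p h)) = mu p (epss scH mu one Dl eps p h) g \<and>
        sum_list (map (\<lambda>(a, b). mu p a (mu p (S (- p) b) g)) (Dl p (- p) h)) = mu p (epst scH mu one Dl eps p h) g \<and>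
        sum_list (map (\<lambda>(a, b). mu p (mu p g a) (S (- p) b)) (Dl p (- p) h)) = mu p g (epst scH mu one Dl eps p h) \<and>
        sum_list (map (\<lambda>(a, b). mu p (mu p g (S (- p) a)) b) (Dl (- p) p h)) = mu p g (epss scH mu one Dl eps p h)"
    and crossing: "\<forall>p q. lin_map scH (Hc q) scH (Hc (p + q + - p)) (pi p q) \<and> bij_betw (pi p q) (Hc q) (Hc (p + q + - p)) \<and>
        (\<forall>x\<in>Hc q. \<forall>y\<in>Hc q. pi p q (mu q x y) = mu (p + q + - p) (pi p q x) (pi p q y)) \<and>
        pi p q (one q) = one (p + q + - p)"
    and crossing_Dl: "\<forall>p q r. \<forall>h\<in>Hc (q + r).
        teq2 scH (Hc (p + q + - p)) scH (Hc (p + r + - p))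
          (map (\<lambda>(a, b). (pi p q a, pi p r b)) (Dl q r h))
          (Dl (p + q + - p) (p + r + - p) (pi p (q + r) h))"
    and crossing_eps: "\<forall>p. \<forall>h\<in>Hc 0. eps (pi p 0 h) = eps h"
    and crossing_comp: "\<forall>p q r. \<forall>h\<in>Hc r. pi (p + q) r h = pi p (q + r + - q) (pi q r h)"

lemma crossed_hq_if_crossed_gcwhq:
  "crossed_gcwhq scH Hc mu one Dl eps S pi \<Longrightarrow> crossed_hq scH Hc mu one Dl eps S pi"
  unfolding crossed_gcwhq_def crossed_hq_def by (elim conjE) (intro conjI; assumption)

context crossed_hq
begin

abbreviation "et \<equiv> epst scH mu one Dl eps"
abbreviation "es \<equiv> epss scH mu one Dl eps"

sublocale vH: vector_space scH by (rule vector_space_H)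

declare vH.scale_left_distrib[simp] vH.scale_right_distrib[simp]

lemma Hc_zero[simp]: "0 \<in> Hc p"
  and Hc_add[simp]: "x \<in> Hc p \<Longrightarrow> y \<in> Hc p \<Longrightarrow> x + y \<in> Hc p"
  and Hc_scale[simp]: "x \<in> Hc p \<Longrightarrow> scH c x \<in> Hc p"
  using subspace_Hc by blast+

lemma Hc_sum_list: "set xs \<subseteq> Hc p \<Longrightarrow> sum_list xs \<in> Hc p"
  by (induction xs) auto

lemma mu_closed[simp]: "x \<in> Hc p \<Longrightarrow> y \<in> Hc p \<Longrightarrow> mu p x y \<in> Hc p"
  using closed_mu by blast

lemma mu_add_left[simp]: "x \<in> Hc p \<Longrightarrow> y \<in> Hc p \<Longrightarrow> z \<in> Hc p \<Longrightarrow> mu p (x + y) z = mu p x z + mu p y z"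
  and mu_add_right[simp]: "x \<in> Hc p \<Longrightarrow> y \<in> Hc p \<Longrightarrow> z \<in> Hc p \<Longrightarrow> mu p z (x + y) = mu p z x + mu p z y"
  using additive_mu by blast+

lemma mu_scale_left[simp]: "x \<in> Hc p \<Longrightarrow> y \<in> Hc p \<Longrightarrow> mu p (scH c x) y = scH c (mu p x y)"
  and mu_scale_right[simp]: "x \<in> Hc p \<Longrightarrow> y \<in> Hc p \<Longrightarrow> mu p x (scH c y) = scH c (mu p x y)"
  using homogeneous_mu by blast+

lemma one_closed[simp]: "one p \<in> Hc p"
  and mu_one_left[simp]: "x \<in> Hc p \<Longrightarrow> mu p (one p) x = x"
  and mu_one_right[simp]: "x \<in> Hc p \<Longrightarrow> mu p x (one p) = x"
  using unit_one by blast+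

lemma Dl_closed: "(a, b) \<in> set (Dl p q h) \<Longrightarrow> h \<in> Hc m \<Longrightarrow> m = p + q \<Longrightarrow> a \<in> Hc p \<and> b \<in> Hc q"
  and Dl_add: "x \<in> Hc (p + q) \<Longrightarrow> y \<in> Hc (p + q) \<Longrightarrow>
    teq2 scH (Hc p) scH (Hc q) (Dl p q (x + y)) (Dl p q x @ Dl p q y)"
  and Dl_scale: "x \<in> Hc (p + q) \<Longrightarrow>
    teq2 scH (Hc p) scH (Hc q) (Dl p q (scH c x)) (map (\<lambda>(b, d). (scH c b, d)) (Dl p q x))"
  using tlin_Dl unfolding tlin_def by blast+

lemma delta3_coassoc: "h \<in> Hc m \<Longrightarrow> m = p + q + r \<Longrightarrow> t = q + r \<Longrightarrow>
    teq3 scH (Hc p) scH (Hc q) scH (Hc r) (delta3 Dl p q r h)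
      [(a, b, c). (a, y) \<leftarrow> Dl p t h, (b, c) \<leftarrow> Dl q r y]"
  using coassoc_Dl by blast

lemma eps_add[simp]: "x \<in> Hc 0 \<Longrightarrow> y \<in> Hc 0 \<Longrightarrow> eps (x + y) = eps x + eps y"
  and eps_scale[simp]: "x \<in> Hc 0 \<Longrightarrow> eps (scH c x) = c * eps x"
  using lin_eps unfolding lin_fun_def by blast+

lemma S_closed[simp]: "h \<in> Hc r \<Longrightarrow> - r = m \<Longrightarrow> S r h \<in> Hc m"
  and S_add[simp]: "x \<in> Hc r \<Longrightarrow> y \<in> Hc r \<Longrightarrow> S r (x + y) = S r x + S r y"
  and S_scale[simp]: "x \<in> Hc r \<Longrightarrow> S r (scH c x) = scH c (S r x)"
  using lin_map_S unfolding lin_map_def by blast+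

lemma S_eq_sum_epst: "h \<in> Hc p \<Longrightarrow>
    S p h = sum_list (map (\<lambda>(a, b). mu (- p) (S p a) (et (- p) b)) (Dl p 0 h))"
  and S_eq_sum_epss: "h \<in> Hc p \<Longrightarrow>
    S p h = sum_list (map (\<lambda>(a, b). mu (- p) (es (- p) a) (S p b)) (Dl 0 p h))"
  using S_epst_epss by blast+

lemma sum_S_mu_mu: "h \<in> Hc 0 \<Longrightarrow> g \<in> Hc p \<Longrightarrow>
    sum_list (map (\<lambda>(a, b). mu p (S (- p) a) (mu p b g)) (Dl (- p) p h)) = mu p (es p h) g"
  and sum_mu_mu_S: "h \<in> Hc 0 \<Longrightarrow> g \<in> Hc p \<Longrightarrow>
    sum_list (map (\<lambda>(a, b). mu p (mu p g a) (S (- p) b)) (Dl p (- p) h)) = mu p g (et p h)"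
  using antipode by blast+

lemma pi_lin_map: "x + r + - x = m \<Longrightarrow> lin_map scH (Hc r) scH (Hc m) (pi x r)"
  using crossing by blast

lemma pi_closed[simp]: "h \<in> Hc r \<Longrightarrow> x + r + - x = m \<Longrightarrow> pi x r h \<in> Hc m"
  and pi_add[simp]: "a \<in> Hc r \<Longrightarrow> b \<in> Hc r \<Longrightarrow> pi x r (a + b) = pi x r a + pi x r b"
  and pi_scale[simp]: "a \<in> Hc r \<Longrightarrow> pi x r (scH c a) = scH c (pi x r a)"
  using pi_lin_map unfolding lin_map_def by blast+

lemma pi_mu[simp]: "a \<in> Hc r \<Longrightarrow> b \<in> Hc r \<Longrightarrow> pi x r (mu r a b) = mu (x + r + - x) (pi x r a) (pi x r b)"
  and pi_one[simp]: "pi x r (one r) = one (x + r + - x)"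
  and pi_inj: "a \<in> Hc r \<Longrightarrow> b \<in> Hc r \<Longrightarrow> pi x r a = pi x r b \<Longrightarrow> a = b"
  using crossing unfolding bij_betw_def inj_on_def by blast+

lemma eps_pi[simp]: "h \<in> Hc 0 \<Longrightarrow> eps (pi x 0 h) = eps h"
  using crossing_eps by blast

lemma eps_mu_pi[simp]: "a \<in> Hc 0 \<Longrightarrow> b \<in> Hc 0 \<Longrightarrow> eps (mu 0 (pi x 0 a) (pi x 0 b)) = eps (mu 0 a b)"
  using eps_pi[of "mu 0 a b" x] by simp

lemma pi_Dl: "h \<in> Hc s \<Longrightarrow> s = q + r \<Longrightarrow> x + q + - x = q' \<Longrightarrow> x + r + - x = r' \<Longrightarrow>
   teq2 scH (Hc q') scH (Hc r') (map (\<lambda>(a, b). (pi x q a, pi x r b)) (Dl q r h)) (Dl q' r' (pi x s h))"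
  using crossing_Dl by blast

lemma pi_pi[simp]: "k \<in> Hc n \<Longrightarrow> b + n + - b = m \<Longrightarrow> pi a m (pi b n k) = pi (a + b) n k"
  using crossing_comp by metis

lemma pi_zero[simp]: "k \<in> Hc n \<Longrightarrow> pi 0 n k = k"
  using pi_inj[of "pi 0 n k" n k 0] pi_pi[of k n 0 n 0] by simp

lemma pi_sum_list_map_pair: "(\<And>a b. (a, b) \<in> set xs \<Longrightarrow> f a b \<in> Hc r) \<Longrightarrow>
   pi x r (sum_list (map (\<lambda>(a, b). f a b) xs)) = sum_list (map (\<lambda>(a, b). pi x r (f a b)) xs)"
  by (rule additive_sum_list_map_pair[where A="Hc r"]) auto

lemma mu_sum_list_map_pair: "(\<And>a b. (a, b) \<in> set xs \<Longrightarrow> f a b \<in> Hc r) \<Longrightarrow> z \<in> Hc r \<Longrightarrow>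
   mu r (sum_list (map (\<lambda>(a, b). f a b) xs)) z = sum_list (map (\<lambda>(a, b). mu r (f a b) z) xs)"
  by (rule additive_sum_list_map_pair[where A="Hc r" and F="\<lambda>u. mu r u z"]) auto

lemma epst_closed[simp]: "h \<in> Hc 0 \<Longrightarrow> et p h \<in> Hc p"
  unfolding epst_def by (rule Hc_sum_list) (auto dest: Dl_closed[OF _ one_closed])

lemma epss_closed[simp]: "h \<in> Hc 0 \<Longrightarrow> es p h \<in> Hc p"
  unfolding epss_def by (rule Hc_sum_list) (auto dest: Dl_closed[OF _ one_closed])

lemma epss_add[simp]: "u \<in> Hc 0 \<Longrightarrow> v \<in> Hc 0 \<Longrightarrow> es p (u + v) = es p u + es p v"
  unfolding epss_def
  by (rule sum_list_map_pair_add_cong) (auto dest: Dl_closed[OF _ one_closed])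

lemma epss_scale[simp]: "u \<in> Hc 0 \<Longrightarrow> es p (scH c u) = scH c (es p u)"
  unfolding epss_def vH.scale_sum_list_map_pair
  by (rule sum_list_map_pair_cong) (auto dest: Dl_closed[OF _ one_closed] simp: vH.scale_scale)

lemma pi_epst:
  assumes h: "h \<in> Hc 0" and p': "x + p + - x = p'"
  shows "pi x p (et p h) = et p' (pi x 0 h)"
proof -
  let ?L = "Dl 0 p (one p)"
  have mem: "a \<in> Hc 0" "b \<in> Hc p" if "(a, b) \<in> set ?L" for a b
    using Dl_closed[OF that one_closed] by auto
  have "pi x p (et p h) = sum_list (map (\<lambda>(a, b). pi x p (scH (eps (mu 0 a h)) b)) ?L)"
    unfolding epst_def by (rule pi_sum_list_map_pair) (simp add: mem)
  also have "\<dots> = sum_list (map (\<lambda>(a, b). scH (eps (mu 0 (pi x 0 a) (pi x 0 h))) (pi x p b)) ?L)"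
    by (rule sum_list_map_pair_cong) (simp add: mem h)
  also have "\<dots> = sum_list (map (\<lambda>(a, b). scH (eps (mu 0 a (pi x 0 h))) b)
                    (map (\<lambda>(a, b). (pi x 0 a, pi x p b)) ?L))"
    by (simp only: sum_list_map_pair_map)
  also have "\<dots> = sum_list (map (\<lambda>(a, b). scH (eps (mu 0 a (pi x 0 h))) b) (Dl 0 p' (pi x p (one p))))"
    by (rule teq2_sum_eq[OF vector_space_H pi_Dl[where s=p and q=0 and r=p and q'=0 and r'=p']])
       (use h p' in \<open>auto simp: lin_on_def vH.scale_scale\<close>)
  also have "\<dots> = et p' (pi x 0 h)" using p' by (simp add: epst_def)
  finally show ?thesis .
qed

lemma pi_epss:
  assumes h: "h \<in> Hc 0" and p': "x + p + - x = p'"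
  shows "pi x p (es p h) = es p' (pi x 0 h)"
proof -
  let ?L = "Dl p 0 (one p)"
  have mem: "a \<in> Hc p" "b \<in> Hc 0" if "(a, b) \<in> set ?L" for a b
    using Dl_closed[OF that one_closed] by auto
  have "pi x p (es p h) = sum_list (map (\<lambda>(a, b). pi x p (scH (eps (mu 0 h b)) a)) ?L)"
    unfolding epss_def by (rule pi_sum_list_map_pair) (simp add: mem)
  also have "\<dots> = sum_list (map (\<lambda>(a, b). scH (eps (mu 0 (pi x 0 h) (pi x 0 b))) (pi x p a)) ?L)"
    by (rule sum_list_map_pair_cong) (simp add: mem h)
  also have "\<dots> = sum_list (map (\<lambda>(a, b). scH (eps (mu 0 (pi x 0 h) b)) a)
                    (map (\<lambda>(a, b). (pi x p a, pi x 0 b)) ?L))"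
    by (simp only: sum_list_map_pair_map)
  also have "\<dots> = sum_list (map (\<lambda>(a, b). scH (eps (mu 0 (pi x 0 h) b)) a) (Dl p' 0 (pi x p (one p))))"
    by (rule teq2_sum_eq[OF vector_space_H pi_Dl[where s=p and q=p and r=0 and q'=p' and r'=0]])
       (use h p' in \<open>auto simp: lin_on_def vH.scale_scale\<close>)
  also have "\<dots> = es p' (pi x 0 h)" using p' by (simp add: epss_def)
  finally show ?thesis .
qed

lemma sum_S_mu_eq_epss:
  assumes y: "y \<in> Hc 0"
  shows "sum_list (map (\<lambda>(a, c). mu (- r) (S r a) c) (Dl r (- r) y)) = es (- r) y"
proof -
  have mem: "a \<in> Hc r" "c \<in> Hc (- r)" if "(a, c) \<in> set (Dl r (- r) y)" for a c
    using Dl_closed[OF that y] by auto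
  have "sum_list (map (\<lambda>(a, c). mu (- r) (S r a) c) (Dl r (- r) y))
      = sum_list (map (\<lambda>(a, c). mu (- r) (S (- (- r)) a) (mu (- r) c (one (- r)))) (Dl (- (- r)) (- r) y))"
    by simp (rule sum_list_map_pair_cong, simp add: mem)
  also have "\<dots> = es (- r) y"
    using sum_S_mu_mu[OF y one_closed, of "- r"] y by simp
  finally show ?thesis .
qed

text \<open>Expands g \<epsilon>^t(y) as \<Sigma> (g y_1) S(y_2) and pulls the crossing out of \<Delta>.\<close>
lemma pi_mu_epst:
  assumes g: "g \<in> Hc (- r)" and b: "b \<in> Hc 0"
  shows "mu (x + (- r + - x)) (pi x (- r) g) (et (x + (- r + - x)) (pi x 0 b))
    = sum_list (map (\<lambda>(c, d). mu (x + (- r + - x)) (pi x (- r) (mu (- r) g c)) (S (x + (r + - x)) (pi x r d)))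
        (Dl (- r) r b))"
proof -
  let ?n = "x + (- r + - x)" and ?r = "x + (r + - x)"
  have mem: "c \<in> Hc (- r)" "d \<in> Hc r" if "(c, d) \<in> set (Dl (- r) r b)" for c d
    using Dl_closed[OF that b] by auto
  have "mu ?n (pi x (- r) g) (et ?n (pi x 0 b))
      = sum_list (map (\<lambda>(c, d). mu ?n (mu ?n (pi x (- r) g) c) (S ?r d)) (Dl ?n ?r (pi x 0 b)))"
    using sum_mu_mu_S[of "pi x 0 b" "pi x (- r) g" ?n] g b by simp
  also have "\<dots> = sum_list (map (\<lambda>(c, d). mu ?n (mu ?n (pi x (- r) g) c) (S ?r d))
      (map (\<lambda>(c, d). (pi x (- r) c, pi x r d)) (Dl (- r) r b)))"
    by (rule teq2_sum_eq[OF vector_space_H pi_Dl[where s=0 and q="- r" and r=r and q'="?n" and r'="?r"], symmetric])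
       (use g b in \<open>auto simp: lin_on_def\<close>)
  also have "\<dots> = sum_list (map (\<lambda>(c, d). mu ?n (pi x (- r) (mu (- r) g c)) (S ?r (pi x r d))) (Dl (- r) r b))"
    unfolding sum_list_map_pair_map by (rule sum_list_map_pair_cong) (simp add: mem g)
  finally show ?thesis .
qed

text \<open>From S h = \<Sigma> S(h_1) \<epsilon>^t(h_2): expand \<epsilon>^t through the antipode, regroup by
  coassociativity and collapse \<Sigma> S(y_1) y_2 = \<epsilon>^s(y); the crossing passes through every step
  and the result is \<Sigma> \<epsilon>^s(\<pi> h_1) S(\<pi> h_2) = S(\<pi> h).\<close>
lemma pi_S:
  assumes h: "h \<in> Hc r"
  shows "pi x (- r) (S r h) = S (x + r + - x) (pi x r h)"
proof -
  let ?n = "x + (- r + - x)" and ?r = "x + (r + - x)"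
  let ?F = "\<lambda>a c d. mu ?n (pi x (- r) (mu (- r) (S r a) c)) (S ?r (pi x r d))"
  have memL: "a \<in> Hc r" "b \<in> Hc 0" if "(a, b) \<in> set (Dl r 0 h)" for a b
    using Dl_closed[OF that h] by auto
  have "pi x (- r) (S r h)
      = sum_list (map (\<lambda>(a, b). mu ?n (pi x (- r) (S r a)) (et ?n (pi x 0 b))) (Dl r 0 h))"
    by (subst S_eq_sum_epst[OF h], subst pi_sum_list_map_pair)
       (simp_all add: memL pi_epst[where p'="?n"] cong: sum_list_map_pair_cong)
  also have "\<dots> = sum_list (map (\<lambda>(a, b). sum_list (map (\<lambda>(c, d). ?F a c d) (Dl (- r) r b))) (Dl r 0 h))"
    by (rule sum_list_map_pair_cong) (simp add: memL pi_mu_epst)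
  also have "\<dots> = sum_list (map (\<lambda>(a, c, d). ?F a c d) [(a, c, d). (a, b) \<leftarrow> Dl r 0 h, (c, d) \<leftarrow> Dl (- r) r b])"
    by (simp add: sum_list_concat_map map_concat comp_def case_prod_unfold)
  also have "\<dots> = sum_list (map (\<lambda>(a, c, d). ?F a c d) (delta3 Dl r (- r) r h))"
    by (rule teq3_sum_eq[OF vector_space_H delta3_coassoc[where m=r and t=0], symmetric])
       (use h in \<open>auto simp: lin_on_def\<close>)
  also have "\<dots> = sum_list (map (\<lambda>(y, d). sum_list (map (\<lambda>(a, c). ?F a c d) (Dl r (- r) y))) (Dl 0 r h))"
    by (simp add: delta3_def sum_list_concat_map map_concat comp_def case_prod_unfold)
  also have "\<dots> = sum_list (map (\<lambda>(y, d). mu ?n (es ?n y) (S ?r d)) (map (\<lambda>(y, d). (pi x 0 y, pi x r d)) (Dl 0 r h)))"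
    unfolding sum_list_map_pair_map
  proof (rule sum_list_map_pair_cong)
    fix y d assume "(y, d) \<in> set (Dl 0 r h)"
    then have y: "y \<in> Hc 0" and d: "d \<in> Hc r" using Dl_closed h by auto
    have mem: "a \<in> Hc r" "c \<in> Hc (- r)" if "(a, c) \<in> set (Dl r (- r) y)" for a c
      using Dl_closed[OF that y] by auto
    have "sum_list (map (\<lambda>(a, c). ?F a c d) (Dl r (- r) y))
        = mu ?n (pi x (- r) (sum_list (map (\<lambda>(a, c). mu (- r) (S r a) c) (Dl r (- r) y)))) (S ?r (pi x r d))"
      by (subst pi_sum_list_map_pair, simp add: mem, subst mu_sum_list_map_pair) (simp_all add: mem d)
    also have "\<dots> = mu ?n (es ?n (pi x 0 y)) (S ?r (pi x r d))"
      using y by (simp add: sum_S_mu_eq_epss pi_epss[where p'="?n"])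
    finally show "sum_list (map (\<lambda>(a, c). ?F a c d) (Dl r (- r) y)) = mu ?n (es ?n (pi x 0 y)) (S ?r (pi x r d))" .
  qed
  also have "\<dots> = sum_list (map (\<lambda>(y, d). mu ?n (es ?n y) (S ?r d)) (Dl 0 ?r (pi x r h)))"
    by (rule teq2_sum_eq[OF vector_space_H pi_Dl[where s=r and q=0 and r=r and q'=0 and r'="?r"]])
       (use h in \<open>auto simp: lin_on_def\<close>)
  also have "\<dots> = S ?r (pi x r h)"
    using S_eq_sum_epss[of "pi x r h" ?r] h by simp
  finally show ?thesis by simp
qed

lemma pi_S'[simp]: "h \<in> Hc r \<Longrightarrow> - r = m \<Longrightarrow> pi x m (S r h) = S (x + r + - x) (pi x r h)"
  using pi_S by blast

lemma lin_on_sum_Dl: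
  fixes sC :: "'k \<Rightarrow> 'c::ab_group_add \<Rightarrow> 'c"
  assumes vs: "vector_space sC" and l1: "\<forall>b\<in>Hc q. lin_on scH (Hc p) sC (\<lambda>a. f a b)"
    and l2: "\<forall>a\<in>Hc p. lin_on scH (Hc q) sC (f a)" and m: "m = p + q"
  shows "lin_on scH (Hc m) sC (\<lambda>h. sum_list (map (\<lambda>(a, b). f a b) (Dl p q h)))"
  unfolding lin_on_def
proof (intro conjI ballI allI)
  fix x y assume "x \<in> Hc m" "y \<in> Hc m"
  then have "sum_list (map (\<lambda>(a, b). f a b) (Dl p q (x + y)))
      = sum_list (map (\<lambda>(a, b). f a b) (Dl p q x @ Dl p q y))"
    using m by (intro teq2_sum_eq[OF vs Dl_add l1 l2]) auto
  then show "sum_list (map (\<lambda>(a, b). f a b) (Dl p q (x + y))) =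
      sum_list (map (\<lambda>(a, b). f a b) (Dl p q x)) + sum_list (map (\<lambda>(a, b). f a b) (Dl p q y))"
    by simp
next
  fix c x assume x: "x \<in> Hc m"
  interpret vC: vector_space sC by (rule vs)
  have "sum_list (map (\<lambda>(a, b). f a b) (Dl p q (scH c x)))
      = sum_list (map (\<lambda>(a, b). f a b) (map (\<lambda>(b, d). (scH c b, d)) (Dl p q x)))"
    using x m by (intro teq2_sum_eq[OF vs Dl_scale l1 l2]) auto
  also have "\<dots> = sum_list (map (\<lambda>(a, b). f (scH c a) b) (Dl p q x))"
    using sum_list_map_pair_map[of f "scH c" id] by (simp add: case_prod_unfold)
  also have "\<dots> = sum_list (map (\<lambda>(a, b). sC c (f a b)) (Dl p q x))"
    by (rule sum_list_map_pair_cong) (use l1 Dl_closed[OF _ x m] in \<open>auto simp: lin_on_def\<close>)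
  also have "\<dots> = sC c (sum_list (map (\<lambda>(a, b). f a b) (Dl p q x)))"
    by (rule vC.scale_sum_list_map_pair[symmetric])
  finally show "sum_list (map (\<lambda>(a, b). f a b) (Dl p q (scH c x)))
      = sC c (sum_list (map (\<lambda>(a, b). f a b) (Dl p q x)))" .
qed

lemma delta3_closed:
  assumes k: "(k1, k2, k3) \<in> set (delta3 Dl t p s h)" and h: "h \<in> Hc m" and m: "m = t + p + s"
  shows "k1 \<in> Hc t \<and> k2 \<in> Hc p \<and> k3 \<in> Hc s"
proof -
  from k obtain y where y: "(y, k3) \<in> set (Dl (t + p) s h)" and kk: "(k1, k2) \<in> set (Dl t p y)"
    unfolding delta3_def by auto
  have "y \<in> Hc (t + p)" "k3 \<in> Hc s" using Dl_closed[OF y h] m by auto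
  then show ?thesis using Dl_closed[OF kk] by auto
qed

lemma pi_delta3:
  assumes h0: "h0 \<in> Hc m" and m: "m = t + p + s"
    and t': "x + t + - x = t'" and p': "x + p + - x = p'" and s': "x + s + - x = s'"
  shows "teq3 scH (Hc t') scH (Hc p') scH (Hc s') (delta3 Dl t' p' s' (pi x m h0))
           (map (\<lambda>(a, b, c). (pi x t a, pi x p b, pi x s c)) (delta3 Dl t p s h0))"
    (is "teq3 _ _ _ _ _ _ ?L ?R")
  unfolding teq3_def
proof (intro allI impI)
  fix \<phi> :: "'h \<Rightarrow> 'h \<Rightarrow> 'h \<Rightarrow> 'k"
  assume "(\<forall>b\<in>Hc p'. \<forall>c\<in>Hc s'. lin_fun scH (Hc t') (\<lambda>a. \<phi> a b c)) \<and>
      (\<forall>a\<in>Hc t'. \<forall>c\<in>Hc s'. lin_fun scH (Hc p') (\<lambda>b. \<phi> a b c)) \<and>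
      (\<forall>a\<in>Hc t'. \<forall>b\<in>Hc p'. lin_fun scH (Hc s') (\<phi> a b))"
  then have l1: "\<forall>b\<in>Hc p'. \<forall>c\<in>Hc s'. lin_on scH (Hc t') (*) (\<lambda>a. \<phi> a b c)"
    and l2: "\<forall>a\<in>Hc t'. \<forall>c\<in>Hc s'. lin_on scH (Hc p') (*) (\<lambda>b. \<phi> a b c)"
    and l3: "\<forall>a\<in>Hc t'. \<forall>b\<in>Hc p'. lin_on scH (Hc s') (*) (\<phi> a b)"
    by (auto simp: lin_fun_iff_lin_on)
  define \<psi> where "\<psi> y z = sum_list (map (\<lambda>(a, b). \<phi> a b z) (Dl t' p' y))" for y z
  have \<psi>1: "\<forall>z\<in>Hc s'. lin_on scH (Hc (t' + p')) (*) (\<lambda>y. \<psi> y z)"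
    unfolding \<psi>_def using l1 l2 by (intro ballI lin_on_sum_Dl[OF vector_space_mult]) auto
  have \<psi>2: "\<forall>y\<in>Hc (t' + p'). lin_on scH (Hc s') (*) (\<psi> y)"
  proof (intro ballI)
    fix y assume y: "y \<in> Hc (t' + p')"
    show "lin_on scH (Hc s') (*) (\<psi> y)" unfolding \<psi>_def lin_on_def
    proof (intro conjI ballI allI)
      fix z1 z2 assume "z1 \<in> Hc s'" "z2 \<in> Hc s'"
      then show "sum_list (map (\<lambda>(a, b). \<phi> a b (z1 + z2)) (Dl t' p' y)) =
          sum_list (map (\<lambda>(a, b). \<phi> a b z1) (Dl t' p' y)) + sum_list (map (\<lambda>(a, b). \<phi> a b z2) (Dl t' p' y))"
        by (intro sum_list_map_pair_add_cong) (use l3 Dl_closed[OF _ y] in \<open>auto simp: lin_on_def\<close>)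
    next
      fix c z assume "z \<in> Hc s'"
      then show "sum_list (map (\<lambda>(a, b). \<phi> a b (scH c z)) (Dl t' p' y)) =
          c * sum_list (map (\<lambda>(a, b). \<phi> a b z) (Dl t' p' y))"
        unfolding vector_space.scale_sum_list_map_pair[OF vector_space_mult]
        by (intro sum_list_map_pair_cong) (use l3 Dl_closed[OF _ y] in \<open>auto simp: lin_on_def\<close>)
    qed
  qed
  have "sum_list (map (\<lambda>(a, b, c). \<phi> a b c) ?L) = sum_list (map (\<lambda>(y, z). \<psi> y z) (Dl (t' + p') s' (pi x m h0)))"
    by (simp add: delta3_def \<psi>_def sum_list_concat_map map_concat comp_def case_prod_unfold)
  also have "\<dots> = sum_list (map (\<lambda>(y, z). \<psi> y z) (map (\<lambda>(y, z). (pi x (t + p) y, pi x s z)) (Dl (t + p) s h0)))"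
    by (rule teq2_sum_eq[OF vector_space_mult pi_Dl[where s=m and q="t + p" and r=s and q'="t' + p'" and r'=s'], symmetric])
       (use h0 m t' p' s' \<psi>1 \<psi>2 in auto)
  also have "\<dots> = sum_list (map (\<lambda>(y, z). sum_list (map (\<lambda>(a, b). \<phi> (pi x t a) (pi x p b) (pi x s z)) (Dl t p y)))
                    (Dl (t + p) s h0))"
    unfolding sum_list_map_pair_map
  proof (rule sum_list_map_pair_cong)
    fix y z assume "(y, z) \<in> set (Dl (t + p) s h0)"
    then have y: "y \<in> Hc (t + p)" and z: "pi x s z \<in> Hc s'" using Dl_closed h0 m s' by auto
    have "\<psi> (pi x (t + p) y) (pi x s z)
        = sum_list (map (\<lambda>(a, b). \<phi> a b (pi x s z)) (map (\<lambda>(a, b). (pi x t a, pi x p b)) (Dl t p y)))"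
      unfolding \<psi>_def
      by (rule teq2_sum_eq[OF vector_space_mult pi_Dl[where s="t + p" and q=t and r=p and q'=t' and r'=p'], symmetric])
         (use y t' p' z l1 l2 in auto)
    then show "\<psi> (pi x (t + p) y) (pi x s z)
        = sum_list (map (\<lambda>(a, b). \<phi> (pi x t a) (pi x p b) (pi x s z)) (Dl t p y))"
      by (simp only: sum_list_map_pair_map)
  qed
  also have "\<dots> = sum_list (map (\<lambda>(a, b, c). \<phi> a b c) ?R)"
    by (simp add: delta3_def sum_list_map_triple_map sum_list_concat_map map_concat comp_def case_prod_unfold)
  finally show "sum_list (map (\<lambda>(a, b, c). \<phi> a b c) ?L) = sum_list (map (\<lambda>(a, b, c). \<phi> a b c) ?R)" .
qed

end

locale ydwq_module = crossed_hq scH Hc mu one Dl eps S pi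
  for scH :: "'k::field \<Rightarrow> 'h::ab_group_add \<Rightarrow> 'h"
    and Hc :: "'g::group_add \<Rightarrow> 'h set"
    and mu :: "'g \<Rightarrow> 'h \<Rightarrow> 'h \<Rightarrow> 'h"
    and one :: "'g \<Rightarrow> 'h"
    and Dl :: "'g \<Rightarrow> 'g \<Rightarrow> 'h \<Rightarrow> ('h \<times> 'h) list"
    and eps :: "'h \<Rightarrow> 'k"
    and S :: "'g \<Rightarrow> 'h \<Rightarrow> 'h"
    and pi :: "'g \<Rightarrow> 'g \<Rightarrow> 'h \<Rightarrow> 'h" +
  fixes scV :: "'k \<Rightarrow> 'v::ab_group_add \<Rightarrow> 'v"
    and p :: 'g
    and act :: "'v \<Rightarrow> 'h \<Rightarrow> 'v"
    and rho :: "'g \<Rightarrow> 'v \<Rightarrow> ('v \<times> 'h) list"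
  assumes vector_space_V: "vector_space scV"
    and additive_act_left: "\<forall>h\<in>Hc p. \<forall>v w. act (v + w) h = act v h + act w h"
    and homogeneous_act_left: "\<forall>h\<in>Hc p. \<forall>c v. act (scV c v) h = scV c (act v h)"
    and additive_act_right: "\<forall>v. \<forall>x\<in>Hc p. \<forall>y\<in>Hc p. act v (x + y) = act v x + act v y"
    and homogeneous_act_right: "\<forall>v c. \<forall>x\<in>Hc p. act v (scH c x) = scV c (act v x)"
    and unit_act: "\<forall>v. act v (one p) = v"
    and antipode_act: "\<forall>v. \<forall>h\<in>Hc 0.
       sum_list (map (\<lambda>(a, b). act (act v a) (S (- p) b)) (Dl p (- p) h)) = act v (epst scH mu one Dl eps p h) \<and>
       sum_list (map (\<lambda>(a, b). act (act v (S (- p) a)) b) (Dl (- p) p h)) = act v (epss scH mu one Dl eps p h)"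
    and rho_tlin: "\<forall>r. tlin scV UNIV scV UNIV scH (Hc r) (rho r)"
    and coassoc_rho: "\<forall>r1 r2 v. teq3 scV UNIV scH (Hc r1) scH (Hc r2)
        [(a, b, c). (x, c) \<leftarrow> rho r2 v, (a, b) \<leftarrow> rho r1 x]
        [(a, b, c). (a, y) \<leftarrow> rho (r1 + r2) v, (b, c) \<leftarrow> Dl r1 r2 y]"
    and counit_rho: "\<forall>v. sum_list (map (\<lambda>(a, b). scV (eps b) a) (rho 0 v)) = v"
    and yetter_drinfeld: "\<forall>v r. \<forall>h\<in>Hc p. teq2 scV UNIV scH (Hc r) (rho r (act v h))
        [(act a h2, mu r (S (- r) (pi (- p) (p + - r + - p) h1)) (mu r b h3)).
            (a, b) \<leftarrow> rho r v, (h1, h2, h3) \<leftarrow> delta3 Dl (p + - r + - p) p r h]"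
    and assoc_rho: "\<forall>v r. \<forall>g\<in>Hc r. \<forall>l\<in>Hc r.
        teq2 scV UNIV scH (Hc r) [(a, mu r (mu r g l) b). (a, b) \<leftarrow> rho r v] [(a, mu r g (mu r l b)). (a, b) \<leftarrow> rho r v] \<and>
        teq2 scV UNIV scH (Hc r) [(a, mu r (mu r g b) l). (a, b) \<leftarrow> rho r v] [(a, mu r g (mu r b l)). (a, b) \<leftarrow> rho r v]"

lemma ydwq_module_if_ydwq:
  "crossed_gcwhq scH Hc mu one Dl eps S pi \<Longrightarrow> ydwq scH Hc mu one Dl eps S pi scV p act rho \<Longrightarrow>
   ydwq_module scH Hc mu one Dl eps S pi scV p act rho"
  unfolding ydwq_module_def ydwq_module_axioms_def ydwq_def
  by (intro conjI crossed_hq_if_crossed_gcwhq; elim conjE; assumption)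

context ydwq_module
begin

lemma act_add_left[simp]: "h \<in> Hc p \<Longrightarrow> act (v + w) h = act v h + act w h"
  using additive_act_left by blast

lemma act_scale_left[simp]: "h \<in> Hc p \<Longrightarrow> act (scV c v) h = scV c (act v h)"
  using homogeneous_act_left by blast

lemma act_add_right[simp]: "x \<in> Hc p \<Longrightarrow> y \<in> Hc p \<Longrightarrow> act v (x + y) = act v x + act v y"
  using additive_act_right by blast

lemma act_scale_right[simp]: "x \<in> Hc p \<Longrightarrow> act v (scH c x) = scV c (act v x)"
  using homogeneous_act_right by blast

lemma act_one[simp]: "act v (one p) = v"
  using unit_act by blast

lemma act_act_S: "h \<in> Hc 0 \<Longrightarrow>
    sum_list (map (\<lambda>(a, b). act (act v a) (S (- p) b)) (Dl p (- p) h)) = act v (et p h)"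
  and act_S_act: "h \<in> Hc 0 \<Longrightarrow>
    sum_list (map (\<lambda>(a, b). act (act v (S (- p) a)) b) (Dl (- p) p h)) = act v (es p h)"
  using antipode_act by blast+

lemma rho_act: "h \<in> Hc p \<Longrightarrow> teq2 scV UNIV scH (Hc r) (rho r (act v h))
    [(act a h2, mu r (S (- r) (pi (- p) (p + - r + - p) h1)) (mu r b h3)).
        (a, b) \<leftarrow> rho r v, (h1, h2, h3) \<leftarrow> delta3 Dl (p + - r + - p) p r h]"
  using yetter_drinfeld by blast

lemma rho_assoc_left: "g \<in> Hc r \<Longrightarrow> l \<in> Hc r \<Longrightarrow> teq2 scV UNIV scH (Hc r)
    [(a, mu r (mu r g l) b). (a, b) \<leftarrow> rho r v] [(a, mu r g (mu r l b)). (a, b) \<leftarrow> rho r v]"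
  and rho_assoc_mid: "g \<in> Hc r \<Longrightarrow> l \<in> Hc r \<Longrightarrow> teq2 scV UNIV scH (Hc r)
    [(a, mu r (mu r g b) l). (a, b) \<leftarrow> rho r v] [(a, mu r g (mu r b l)). (a, b) \<leftarrow> rho r v]"
  using assoc_rho by blast+

lemma rho_closed: "(a, b) \<in> set (rho r v) \<Longrightarrow> b \<in> Hc r"
  using rho_tlin unfolding tlin_def by blast

lemma teq2_map_pi:
  "teq2 scV UNIV scH (Hc s) X Y \<Longrightarrow> x + s + - x = r \<Longrightarrow>
   teq2 scV UNIV scH (Hc r) (map (\<lambda>(a, b). (a, pi x s b)) X) (map (\<lambda>(a, b). (a, pi x s b)) Y)"
  by (rule teq2_map_snd[OF _ pi_lin_map])

text \<open>The grade, action and coaction of ^qV, with V and ^qV identified as vector spaces.\<close>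
abbreviation "qp q \<equiv> q + p + - q"
abbreviation "qact q \<equiv> \<lambda>v h. act v (pi (- q) (q + p + - q) h)"
abbreviation "qrho q \<equiv> \<lambda>r v. map (\<lambda>(a, b). (a, pi q (- q + r + q) b)) (rho (- q + r + q) v)"

lemma qact_act_S:
  assumes h: "h \<in> Hc 0"
  shows "sum_list (map (\<lambda>(a, b). qact q (qact q v a) (S (- qp q) b)) (Dl (qp q) (- qp q) h))
    = qact q v (et (qp q) h)"
proof -
  have mem: "a \<in> Hc (qp q)" "b \<in> Hc (- qp q)" if "(a, b) \<in> set (Dl (qp q) (- qp q) h)" for a b
    using Dl_closed[OF that h] by auto
  have "sum_list (map (\<lambda>(a, b). qact q (qact q v a) (S (- qp q) b)) (Dl (qp q) (- qp q) h))
      = sum_list (map (\<lambda>(a, b). act (act v a) (S (- p) b))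
          (map (\<lambda>(a, b). (pi (- q) (qp q) a, pi (- q) (- qp q) b)) (Dl (qp q) (- qp q) h)))"
    unfolding sum_list_map_pair_map by (rule sum_list_map_pair_cong) (use mem in simp)
  also have "\<dots> = sum_list (map (\<lambda>(a, b). act (act v a) (S (- p) b)) (Dl p (- p) (pi (- q) 0 h)))"
    by (rule teq2_sum_eq[OF vector_space_V pi_Dl[where s=0 and q="qp q" and r="- qp q" and q'=p and r'="- p"]])
       (use h in \<open>auto simp: lin_on_def\<close>)
  also have "\<dots> = qact q v (et (qp q) h)"
    using h by (simp add: act_act_S pi_epst)
  finally show ?thesis .
qed

lemma qact_S_act:
  assumes h: "h \<in> Hc 0"
  shows "sum_list (map (\<lambda>(a, b). qact q (qact q v (S (- qp q) a)) b) (Dl (- qp q) (qp q) h))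
    = qact q v (es (qp q) h)"
proof -
  have mem: "a \<in> Hc (- qp q)" "b \<in> Hc (qp q)" if "(a, b) \<in> set (Dl (- qp q) (qp q) h)" for a b
    using Dl_closed[OF that h] by auto
  have "sum_list (map (\<lambda>(a, b). qact q (qact q v (S (- qp q) a)) b) (Dl (- qp q) (qp q) h))
      = sum_list (map (\<lambda>(a, b). act (act v (S (- p) a)) b)
          (map (\<lambda>(a, b). (pi (- q) (- qp q) a, pi (- q) (qp q) b)) (Dl (- qp q) (qp q) h)))"
    unfolding sum_list_map_pair_map by (rule sum_list_map_pair_cong) (use mem in simp)
  also have "\<dots> = sum_list (map (\<lambda>(a, b). act (act v (S (- p) a)) b) (Dl (- p) p (pi (- q) 0 h)))"
    by (rule teq2_sum_eq[OF vector_space_V pi_Dl[where s=0 and q="- qp q" and r="qp q" and q'="- p" and r'=p]])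
       (use h in \<open>auto simp: lin_on_def\<close>)
  also have "\<dots> = qact q v (es (qp q) h)"
    using h by (simp add: act_S_act pi_epss)
  finally show ?thesis .
qed

lemma qrho_tlin: "tlin scV UNIV scV UNIV scH (Hc r) (qrho q r)"
  unfolding tlin_def
proof (intro conjI ballI allI)
  let ?s = "- q + r + q"
  have T: "tlin scV UNIV scV UNIV scH (Hc ?s) (rho ?s)" using rho_tlin by blast
  fix v show "set (qrho q r v) \<subseteq> UNIV \<times> Hc r" using rho_closed by auto
  fix x y :: 'v
  have "teq2 scV UNIV scH (Hc ?s) (rho ?s (x + y)) (rho ?s x @ rho ?s y)"
    using T unfolding tlin_def by blast
  from teq2_map_pi[OF this, of q r]
  show "teq2 scV UNIV scH (Hc r) (qrho q r (x + y)) (qrho q r x @ qrho q r y)" by simp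
  fix c
  have "teq2 scV UNIV scH (Hc ?s) (rho ?s (scV c x)) (map (\<lambda>(b, d). (scV c b, d)) (rho ?s x))"
    using T unfolding tlin_def by blast
  from teq2_map_pi[OF this, of q r]
  show "teq2 scV UNIV scH (Hc r) (qrho q r (scV c x)) (map (\<lambda>(b, d). (scV c b, d)) (qrho q r x))"
    by (simp add: case_prod_unfold comp_def)
qed

lemma qrho_coassoc: "teq3 scV UNIV scH (Hc r1) scH (Hc r2)
    [(a, b, c). (x, c) \<leftarrow> qrho q r2 v, (a, b) \<leftarrow> qrho q r1 x]
    [(a, b, c). (a, y) \<leftarrow> qrho q (r1 + r2) v, (b, c) \<leftarrow> Dl r1 r2 y]"
  (is "teq3 _ _ _ _ _ _ ?L ?R")
  unfolding teq3_def
proof (intro allI impI)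
  let ?s1 = "- q + r1 + q" and ?s2 = "- q + r2 + q" and ?s = "- q + (r1 + r2) + q"
  fix \<phi> :: "'v \<Rightarrow> 'h \<Rightarrow> 'h \<Rightarrow> 'k"
  assume \<phi>: "(\<forall>b\<in>Hc r1. \<forall>c\<in>Hc r2. lin_fun scV UNIV (\<lambda>a. \<phi> a b c)) \<and>
      (\<forall>a\<in>UNIV. \<forall>c\<in>Hc r2. lin_fun scH (Hc r1) (\<lambda>b. \<phi> a b c)) \<and>
      (\<forall>a\<in>UNIV. \<forall>b\<in>Hc r1. lin_fun scH (Hc r2) (\<phi> a b))"
  have "sum_list (map (\<lambda>(a, b, c). \<phi> a b c) ?L) = sum_list (map (\<lambda>(a, b, c). \<phi> a (pi q ?s1 b) (pi q ?s2 c))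
          [(a, b, c). (x, c) \<leftarrow> rho ?s2 v, (a, b) \<leftarrow> rho ?s1 x])"
    by (simp add: sum_list_concat_map map_concat comp_def case_prod_unfold)
  also have "\<dots> = sum_list (map (\<lambda>(a, b, c). \<phi> a (pi q ?s1 b) (pi q ?s2 c))
      [(a, b, c). (a, y) \<leftarrow> rho (?s1 + ?s2) v, (b, c) \<leftarrow> Dl ?s1 ?s2 y])"
    by (rule coassoc_rho[unfolded teq3_def, rule_format]) (use \<phi> in \<open>auto simp: lin_fun_def\<close>)
  also have "\<dots> = sum_list (map (\<lambda>(a, y). sum_list (map (\<lambda>(b, c). \<phi> a (pi q ?s1 b) (pi q ?s2 c))
      (Dl ?s1 ?s2 y))) (rho (?s1 + ?s2) v))"
    by (simp add: sum_list_concat_map map_concat comp_def case_prod_unfold)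
  also have "\<dots> = sum_list (map (\<lambda>(a, y). sum_list (map (\<lambda>(b, c). \<phi> a b c) (Dl r1 r2 (pi q ?s y))))
      (rho (?s1 + ?s2) v))"
  proof (rule sum_list_map_pair_cong)
    fix a y assume "(a, y) \<in> set (rho (?s1 + ?s2) v)"
    then have y: "y \<in> Hc (?s1 + ?s2)" by (rule rho_closed)
    have "sum_list (map (\<lambda>(b, c). \<phi> a b c) (map (\<lambda>(b, c). (pi q ?s1 b, pi q ?s2 c)) (Dl ?s1 ?s2 y)))
        = sum_list (map (\<lambda>(b, c). \<phi> a b c) (Dl r1 r2 (pi q ?s y)))"
      by (rule teq2_sum_eq[OF vector_space_mult pi_Dl[where s="?s" and q="?s1" and r="?s2" and q'=r1 and r'=r2]])
         (use y \<phi> in \<open>auto simp: lin_on_def lin_fun_def\<close>)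
    then show "sum_list (map (\<lambda>(b, c). \<phi> a (pi q ?s1 b) (pi q ?s2 c)) (Dl ?s1 ?s2 y))
        = sum_list (map (\<lambda>(b, c). \<phi> a b c) (Dl r1 r2 (pi q ?s y)))"
      by (simp only: sum_list_map_pair_map)
  qed
  also have "\<dots> = sum_list (map (\<lambda>(a, b, c). \<phi> a b c) ?R)"
    by (simp add: sum_list_concat_map map_concat comp_def case_prod_unfold)
  finally show "sum_list (map (\<lambda>(a, b, c). \<phi> a b c) ?L) = sum_list (map (\<lambda>(a, b, c). \<phi> a b c) ?R)" .
qed

lemma qrho_counit: "sum_list (map (\<lambda>(a, b). scV (eps b) a) (qrho q 0 v)) = v"
proof -
  have "sum_list (map (\<lambda>(a, b). scV (eps b) a) (qrho q 0 v))
      = sum_list (map (\<lambda>(a, b). scV (eps (pi q 0 b)) a) (rho 0 v))"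
    by (simp only: add_0_right left_minus sum_list_map_pair_map_snd)
  also have "\<dots> = sum_list (map (\<lambda>(a, b). scV (eps b) a) (rho 0 v))"
    by (rule sum_list_map_pair_cong) (simp add: rho_closed)
  also have "\<dots> = v" using counit_rho by blast
  finally show ?thesis .
qed

lemma map_snd_qrho:
  assumes "\<And>b. b \<in> Hc (- q + r + q) \<Longrightarrow> F (pi q (- q + r + q) b) = pi q (- q + r + q) (F0 b)"
  shows "map (\<lambda>(a, b). (a, F b)) (qrho q r v)
    = map (\<lambda>(a, b). (a, pi q (- q + r + q) b)) (map (\<lambda>(a, b). (a, F0 b)) (rho (- q + r + q) v))"
  using assms rho_closed[of _ _ "- q + r + q" v] by (auto simp: case_prod_unfold)

lemma qrho_assoc_left:
  assumes g: "g \<in> Hc r" and l: "l \<in> Hc r"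
  shows "teq2 scV UNIV scH (Hc r)
    [(a, mu r (mu r g l) b). (a, b) \<leftarrow> qrho q r v] [(a, mu r g (mu r l b)). (a, b) \<leftarrow> qrho q r v]"
proof -
  let ?s = "- q + r + q" and ?g = "pi (- q) r g" and ?l = "pi (- q) r l"
  have gl: "?g \<in> Hc ?s" "?l \<in> Hc ?s" using g l by simp_all
  have lhs: "[(a, mu r (mu r g l) b). (a, b) \<leftarrow> qrho q r v]
      = map (\<lambda>(a, b). (a, pi q ?s b)) [(a, mu ?s (mu ?s ?g ?l) b). (a, b) \<leftarrow> rho ?s v]"
    by (rule map_snd_qrho) (simp add: g l)
  have rhs: "[(a, mu r g (mu r l b)). (a, b) \<leftarrow> qrho q r v]
      = map (\<lambda>(a, b). (a, pi q ?s b)) [(a, mu ?s ?g (mu ?s ?l b)). (a, b) \<leftarrow> rho ?s v]"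
    by (rule map_snd_qrho) (simp add: g l)
  show ?thesis
    unfolding lhs rhs by (rule teq2_map_pi[OF rho_assoc_left[OF gl]]) simp
qed

lemma qrho_assoc_mid:
  assumes g: "g \<in> Hc r" and l: "l \<in> Hc r"
  shows "teq2 scV UNIV scH (Hc r)
    [(a, mu r (mu r g b) l). (a, b) \<leftarrow> qrho q r v] [(a, mu r g (mu r b l)). (a, b) \<leftarrow> qrho q r v]"
proof -
  let ?s = "- q + r + q" and ?g = "pi (- q) r g" and ?l = "pi (- q) r l"
  have gl: "?g \<in> Hc ?s" "?l \<in> Hc ?s" using g l by simp_all
  have lhs: "[(a, mu r (mu r g b) l). (a, b) \<leftarrow> qrho q r v]
      = map (\<lambda>(a, b). (a, pi q ?s b)) [(a, mu ?s (mu ?s ?g b) ?l). (a, b) \<leftarrow> rho ?s v]"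
    by (rule map_snd_qrho) (simp add: g l)
  have rhs: "[(a, mu r g (mu r b l)). (a, b) \<leftarrow> qrho q r v]
      = map (\<lambda>(a, b). (a, pi q ?s b)) [(a, mu ?s ?g (mu ?s b ?l)). (a, b) \<leftarrow> rho ?s v]"
    by (rule map_snd_qrho) (simp add: g l)
  show ?thesis
    unfolding lhs rhs by (rule teq2_map_pi[OF rho_assoc_mid[OF gl]]) simp
qed

lemma qrho_act:
  assumes h: "h \<in> Hc (qp q)"
  shows "teq2 scV UNIV scH (Hc r) (qrho q r (qact q v h))
    [(qact q a h2, mu r (S (- r) (pi (- qp q) (qp q + - r + - qp q) h1)) (mu r b h3)).
        (a, b) \<leftarrow> qrho q r v, (h1, h2, h3) \<leftarrow> delta3 Dl (qp q + - r + - qp q) (qp q) r h]"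
    (is "teq2 _ _ _ _ _ ?R")
proof -
  let ?s = "- q + r + q" and ?t = "p + - (- q + r + q) + - p" and ?t' = "qp q + - r + - qp q"
  let ?h0 = "pi (- q) (qp q) h"
  have h0: "?h0 \<in> Hc p" and hh: "pi q p ?h0 = h" using h by simp_all
  have "teq2 scV UNIV scH (Hc r) (qrho q r (qact q v h))
      (map (\<lambda>(a, b). (a, pi q ?s b))
        [(act a k2, mu ?s (S (- ?s) (pi (- p) ?t k1)) (mu ?s b k3)).
            (a, b) \<leftarrow> rho ?s v, (k1, k2, k3) \<leftarrow> delta3 Dl ?t p ?s ?h0])"
    by (rule teq2_map_pi[OF rho_act[OF h0]]) simp
  moreover have "teq2 scV UNIV scH (Hc r)
      (map (\<lambda>(a, b). (a, pi q ?s b))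
        [(act a k2, mu ?s (S (- ?s) (pi (- p) ?t k1)) (mu ?s b k3)).
            (a, b) \<leftarrow> rho ?s v, (k1, k2, k3) \<leftarrow> delta3 Dl ?t p ?s ?h0]) ?R"
    (is "teq2 _ _ _ _ ?L _")
    unfolding teq2_def
  proof (intro allI impI)
    fix \<phi> :: "'v \<Rightarrow> 'h \<Rightarrow> 'k"
    assume "(\<forall>b\<in>Hc r. lin_fun scV UNIV (\<lambda>a. \<phi> a b)) \<and> (\<forall>a\<in>UNIV. lin_fun scH (Hc r) (\<phi> a))"
    then have \<phi>: "\<And>a1 a2 b. b \<in> Hc r \<Longrightarrow> \<phi> (a1 + a2) b = \<phi> a1 b + \<phi> a2 b"
      "\<And>a b1 b2. b1 \<in> Hc r \<Longrightarrow> b2 \<in> Hc r \<Longrightarrow> \<phi> a (b1 + b2) = \<phi> a b1 + \<phi> a b2"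
      "\<And>c a b. b \<in> Hc r \<Longrightarrow> \<phi> (scV c a) b = c * \<phi> a b"
      "\<And>c a b. b \<in> Hc r \<Longrightarrow> \<phi> a (scH c b) = c * \<phi> a b"
      unfolding lin_fun_def by auto
    have "sum_list (map (\<lambda>(a, b). \<phi> a b) ?L) = sum_list (map (\<lambda>(a, b). sum_list (map (\<lambda>(k1, k2, k3).
        \<phi> (act a k2) (pi q ?s (mu ?s (S (- ?s) (pi (- p) ?t k1)) (mu ?s b k3)))) (delta3 Dl ?t p ?s ?h0))) (rho ?s v))"
      by (simp only: sum_list_concat_map map_concat map_map comp_def case_prod_unfold fst_conv snd_conv)
    also have "\<dots> = sum_list (map (\<lambda>(a, b). sum_list (map (\<lambda>(h1, h2, h3).
        \<phi> (qact q a h2) (mu r (S (- r) (pi (- qp q) ?t' h1)) (mu r (pi q ?s b) h3))) (delta3 Dl ?t' (qp q) r h)))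
        (rho ?s v))"
    proof (rule sum_list_map_pair_cong)
      fix a b assume "(a, b) \<in> set (rho ?s v)"
      then have b: "b \<in> Hc ?s" by (rule rho_closed)
      let ?G = "\<lambda>h1 h2 h3. \<phi> (qact q a h2) (mu r (S (- r) (pi (- qp q) ?t' h1)) (mu r (pi q ?s b) h3))"
      have "teq3 scH (Hc ?t') scH (Hc (qp q)) scH (Hc r) (delta3 Dl ?t' (qp q) r h)
          (map (\<lambda>(a, b, c). (pi q ?t a, pi q p b, pi q ?s c)) (delta3 Dl ?t p ?s ?h0))"
        by (rule pi_delta3[OF h0, where t="?t" and p=p and s="?s" and x=q and t'="?t'" and p'="qp q" and s'=r,
              unfolded hh]) simp_all
      then have "sum_list (map (\<lambda>(h1, h2, h3). ?G h1 h2 h3) (delta3 Dl ?t' (qp q) r h))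
          = sum_list (map (\<lambda>(h1, h2, h3). ?G h1 h2 h3)
              (map (\<lambda>(a, b, c). (pi q ?t a, pi q p b, pi q ?s c)) (delta3 Dl ?t p ?s ?h0)))"
        by (rule teq3_sum_eq[OF vector_space_mult]) (use b \<phi> in \<open>auto simp: lin_on_def\<close>)
      also have "\<dots> = sum_list (map (\<lambda>(k1, k2, k3).
          \<phi> (act a k2) (pi q ?s (mu ?s (S (- ?s) (pi (- p) ?t k1)) (mu ?s b k3)))) (delta3 Dl ?t p ?s ?h0))"
        unfolding sum_list_map_triple_map
      proof (rule sum_list_map_triple_cong)
        fix k1 k2 k3 assume "(k1, k2, k3) \<in> set (delta3 Dl ?t p ?s ?h0)"
        then have "k1 \<in> Hc ?t \<and> k2 \<in> Hc p \<and> k3 \<in> Hc ?s" by (rule delta3_closed[OF _ h0]) simp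
        with b show "?G (pi q ?t k1) (pi q p k2) (pi q ?s k3)
            = \<phi> (act a k2) (pi q ?s (mu ?s (S (- ?s) (pi (- p) ?t k1)) (mu ?s b k3)))" by simp
      qed
      finally show "sum_list (map (\<lambda>(k1, k2, k3).
          \<phi> (act a k2) (pi q ?s (mu ?s (S (- ?s) (pi (- p) ?t k1)) (mu ?s b k3)))) (delta3 Dl ?t p ?s ?h0))
        = sum_list (map (\<lambda>(h1, h2, h3). ?G h1 h2 h3) (delta3 Dl ?t' (qp q) r h))" by simp
    qed
    also have "\<dots> = sum_list (map (\<lambda>(a, b). \<phi> a b) ?R)"
      by (simp only: sum_list_concat_map map_concat map_map comp_def case_prod_unfold fst_conv snd_conv)
    finally show "sum_list (map (\<lambda>(a, b). \<phi> a b) ?L) = sum_list (map (\<lambda>(a, b). \<phi> a b) ?R)" .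
  qed
  ultimately show ?thesis by (rule teq2_trans)
qed

end

theorem proposition4p6:
  fixes scH :: "'k::field \<Rightarrow> 'h::ab_group_add \<Rightarrow> 'h"
    and Hc :: "'g::group_add \<Rightarrow> 'h set"
    and mu :: "'g \<Rightarrow> 'h \<Rightarrow> 'h \<Rightarrow> 'h"
    and one :: "'g \<Rightarrow> 'h"
    and Dl :: "'g \<Rightarrow> 'g \<Rightarrow> 'h \<Rightarrow> ('h \<times> 'h) list"
    and eps :: "'h \<Rightarrow> 'k"
    and S :: "'g \<Rightarrow> 'h \<Rightarrow> 'h"
    and pi :: "'g \<Rightarrow> 'g \<Rightarrow> 'h \<Rightarrow> 'h"
    and scV :: "'k \<Rightarrow> 'v::ab_group_add \<Rightarrow> 'v"
    and act :: "'v \<Rightarrow> 'h \<Rightarrow> 'v"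
    and rho :: "'g \<Rightarrow> 'v \<Rightarrow> ('v \<times> 'h) list"
    and p q :: 'g
  assumes H: "crossed_gcwhq scH Hc mu one Dl eps S pi"
    and bij_S: "\<forall>r. bij_betw (S r) (Hc r) (Hc (- r))"
    and V: "ydwq scH Hc mu one Dl eps S pi scV p act rho"
  shows "ydwq scH Hc mu one Dl eps S pi scV (q + p + - q)
           (\<lambda>v h. act v (pi (- q) (q + p + - q) h))
           (\<lambda>r v. map (\<lambda>(a, b). (a, pi q (- q + r + q) b)) (rho (- q + r + q) v))"
proof -
  interpret ydwq_module scH Hc mu one Dl eps S pi scV p act rho
    using ydwq_module_if_ydwq[OF H V] .
  show ?thesis
    unfolding ydwq_def
    by (intro conjI allI ballI)
       (assumption | rule vector_space_V qact_act_S qact_S_act qrho_tlin qrho_coassoc qrho_counit qrho_act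
         qrho_assoc_left qrho_assoc_mid | simp)+
qed

end
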